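(* For all integers $n\ge1$ and $0\le m\le n-1$, $$\sum_{j=0}^{m}\begin{bmatrix} n\\ m-j\end{bmatrix}_q\begin{bmatrix} n-m-1\\ j\end{bmatrix}_q q^{j^2}=\sum_{j=0}^{m}\begin{bmatrix} n-1\\ m-j\end{bmatrix}_q\begin{bmatrix} n-m\\ j\end{bmatrix}_q q^{j^2}.$$
   Context: Here $q$ is an indeterminate and for integers $a\ge0$ and $b$, $\begin{bmatrix} a\\ b\end{bmatrix}_q=\frac{(1-q^a)(1-q^{a-1})\cdots(1-q^{a-b+1})}{(1-q)(1-q^2)\cdots(1-q^b)}$ for $0\le b\le a$ and $0$ otherwise. *)

theory Defs
  imports "HOL-Computational_Algebra.Polynomial"
begin

text \<open>Gaussian (q-)binomial coefficient as a polynomial in the indeterminate q = [:0,1:].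
  For 0 \<le> b \<le> a it is the quotient
  (1-q^a)(1-q^(a-1))...(1-q^(a-b+1)) / ((1-q)(1-q^2)...(1-q^b)),
  an exact polynomial division; otherwise 0.\<close>

definition qvar :: "rat poly" where
  "qvar = [:0, 1:]"

definition qbinom :: "int \<Rightarrow> int \<Rightarrow> rat poly" where
  "qbinom a b =
     (if 0 \<le> b \<and> b \<le> a then
        (\<Prod>i\<in>{0..<nat b}. 1 - qvar ^ (nat a - i)) div (\<Prod>i\<in>{1..nat b}. 1 - qvar ^ i)
      else 0)"

end

theory Submission
  imports Defs
begin

text \<open>Apply the q-Pascal rule [N,k] = [N-1,k] + q^(N-k) [N-1,k-1] to the first factor on the
  left and to the second factor on the right. The terms [n-1,m-j][n-m-1,j] q^(j^2) then occur on
  both sides, and what remains are the sums of q^(n-m+j+j^2) [n-1,m-j-1][n-m-1,j] and of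
  q^(n-m-j+j^2) [n-1,m-j][n-m-1,j-1]; these agree after the shift j \<mapsto> j+1, because
  (n-m-(j+1)) + (j+1)^2 = n-m+j+j^2, and the boundary terms vanish.

  The division in the definition of qbinom is exact: the polynomials given by the recursion
  [N+1,k+1] = [N,k] + q^(k+1) [N,k+1] multiply the denominator to the numerator.\<close>

definition qbinom_numer :: "nat \<Rightarrow> nat \<Rightarrow> rat poly" where
  "qbinom_numer N k = (\<Prod>i<k. 1 - qvar ^ (N - i))"

definition qbinom_denom :: "nat \<Rightarrow> rat poly" where
  "qbinom_denom k = (\<Prod>i\<in>{1..k}. 1 - qvar ^ i)"

fun gauss_binomial :: "nat \<Rightarrow> nat \<Rightarrow> rat poly" where
  "gauss_binomial 0 k = (if k = 0 then 1 else 0)"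
| "gauss_binomial (Suc N) 0 = 1"
| "gauss_binomial (Suc N) (Suc k) = gauss_binomial N k + qvar ^ Suc k * gauss_binomial N (Suc k)"

lemma qbinom_numer_eq_0: "N < k \<Longrightarrow> qbinom_numer N k = 0"
  unfolding qbinom_numer_def by (rule prod_zero) (auto intro!: bexI[of _ N])

lemma qbinom_numer_Suc: "qbinom_numer N (Suc k) = qbinom_numer N k * (1 - qvar ^ (N - k))"
  unfolding qbinom_numer_def by simp

lemma qbinom_numer_Suc_Suc: "qbinom_numer (Suc N) (Suc k) = (1 - qvar ^ Suc N) * qbinom_numer N k"
  unfolding qbinom_numer_def prod.lessThan_Suc_shift by simp

lemma qbinom_denom_Suc: "qbinom_denom (Suc k) = qbinom_denom k * (1 - qvar ^ Suc k)"
  unfolding qbinom_denom_def by (simp add: prod.cl_ivl_Suc mult.commute)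

lemma qvar_power_eq_1_iff [simp]: "qvar ^ i = 1 \<longleftrightarrow> i = 0"
proof
  assume "qvar ^ i = 1"
  then have "poly (qvar ^ i) 0 = poly 1 (0::rat)" by simp
  then show "i = 0" by (simp add: qvar_def power_0_left split: if_splits)
qed simp

lemma qbinom_denom_nonzero: "qbinom_denom k \<noteq> 0"
  unfolding qbinom_denom_def by simp

text \<open>Both Pascal-type recursions come from splitting, for k \<le> N,
  1 - q^(N+1) = (1 - q^(k+1)) + q^(k+1) (1 - q^(N-k)) = (1 - q^(N-k)) + q^(N-k) (1 - q^(k+1)).\<close>

lemma gauss_binomial_mult_denom: "gauss_binomial N k * qbinom_denom k = qbinom_numer N k"
proof (induction N arbitrary: k)
  case 0
  then show ?case
    by (cases k) (simp_all add: qbinom_denom_def qbinom_numer_def qbinom_numer_eq_0)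
next
  case (Suc N)
  show ?case
  proof (cases k)
    case 0
    then show ?thesis by (simp add: qbinom_denom_def qbinom_numer_def)
  next
    case (Suc k')
    have "gauss_binomial (Suc N) (Suc k') * qbinom_denom (Suc k')
        = (gauss_binomial N k' * qbinom_denom k') * (1 - qvar ^ Suc k')
          + qvar ^ Suc k' * (gauss_binomial N (Suc k') * qbinom_denom (Suc k'))"
      by (simp add: qbinom_denom_Suc algebra_simps)
    also have "\<dots> = qbinom_numer N k' * (1 - qvar ^ Suc k')
                    + qvar ^ Suc k' * (qbinom_numer N k' * (1 - qvar ^ (N - k')))"
      using Suc.IH by (simp add: qbinom_numer_Suc)
    also have "\<dots> = qbinom_numer (Suc N) (Suc k')"
    proof (cases "k' \<le> N")
      case True
      have N: "Suc N = Suc k' + (N - k')" using True by simp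
      show ?thesis
        unfolding qbinom_numer_Suc_Suc by (subst N, unfold power_add) (simp add: algebra_simps)
    next
      case False
      then show ?thesis by (simp add: qbinom_numer_Suc_Suc qbinom_numer_eq_0)
    qed
    finally show ?thesis using Suc by simp
  qed
qed

lemma gauss_binomial_eq_0: "N < k \<Longrightarrow> gauss_binomial N k = 0"
  using gauss_binomial_mult_denom[of N k] qbinom_numer_eq_0[of N k] qbinom_denom_nonzero[of k]
  by simp

lemma gauss_binomial_0_right [simp]: "gauss_binomial N 0 = 1"
  by (cases N) auto

lemma gauss_binomial_Suc_Suc':
  "gauss_binomial (Suc N) (Suc k) = qvar ^ (N - k) * gauss_binomial N k + gauss_binomial N (Suc k)"
proof (cases "k \<le> N")
  case False
  then show ?thesis by (simp del: gauss_binomial.simps add: gauss_binomial_eq_0)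
next
  case True
  then have N: "Suc N = Suc k + (N - k)" by simp
  have "(qvar ^ (N - k) * gauss_binomial N k + gauss_binomial N (Suc k)) * qbinom_denom (Suc k)
      = qvar ^ (N - k) * (gauss_binomial N k * qbinom_denom k) * (1 - qvar ^ Suc k)
        + gauss_binomial N (Suc k) * qbinom_denom (Suc k)"
    by (simp add: qbinom_denom_Suc algebra_simps)
  also have "\<dots> = qvar ^ (N - k) * qbinom_numer N k * (1 - qvar ^ Suc k)
                  + qbinom_numer N k * (1 - qvar ^ (N - k))"
    by (simp add: gauss_binomial_mult_denom qbinom_numer_Suc)
  also have "\<dots> = qbinom_numer (Suc N) (Suc k)"
    unfolding qbinom_numer_Suc_Suc by (subst N, unfold power_add) (simp add: algebra_simps)
  also have "\<dots> = gauss_binomial (Suc N) (Suc k) * qbinom_denom (Suc k)"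
    by (simp only: gauss_binomial_mult_denom)
  finally show ?thesis
    using qbinom_denom_nonzero[of "Suc k"] by (simp only: mult_cancel_right) simp
qed

lemma qbinom_out_of_range: "\<not> (0 \<le> b \<and> b \<le> a) \<Longrightarrow> qbinom a b = 0"
  unfolding qbinom_def by auto

lemma qbinom_eq_gauss_binomial:
  "qbinom a b = (if 0 \<le> a \<and> 0 \<le> b then gauss_binomial (nat a) (nat b) else 0)"
proof (cases "0 \<le> b \<and> b \<le> a")
  case True
  have "qbinom a b = qbinom_numer (nat a) (nat b) div qbinom_denom (nat b)"
    using True by (simp add: qbinom_def qbinom_numer_def qbinom_denom_def atLeast0LessThan)
  also have "\<dots> = gauss_binomial (nat a) (nat b)"
    by (simp flip: gauss_binomial_mult_denom add: qbinom_denom_nonzero)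
  finally show ?thesis using True by simp
next
  case False
  then have "qbinom a b = 0" by (rule qbinom_out_of_range)
  moreover have "gauss_binomial (nat a) (nat b) = 0" if "0 \<le> a" "0 \<le> b"
    using False that by (intro gauss_binomial_eq_0) simp
  ultimately show ?thesis by simp
qed

lemma qbinom_pascal:
  assumes "N \<ge> 1"
  shows "qbinom N k = qbinom (N - 1) k + qvar ^ nat (N - k) * qbinom (N - 1) (k - 1)"
proof (cases "k \<ge> 1")
  case False
  then show ?thesis using assms by (cases "k = 0") (auto simp: qbinom_eq_gauss_binomial)
next
  case True
  obtain N' where N: "N = int (Suc N')"
    using assms by (intro that[of "nat N - 1"]) simp
  obtain k' where k: "k = int (Suc k')"
    using True by (intro that[of "nat k - 1"]) simp
  have [simp]: "nat (1 + int i) = Suc i" for i by simp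
  have "nat (N - k) = N' - k'" using N k by simp
  then show ?thesis
    using gauss_binomial_Suc_Suc'[of N' k']
    by (simp del: gauss_binomial.simps add: N k qbinom_eq_gauss_binomial algebra_simps)
qed

lemma power_nat_add:
  fixes c :: "'a::monoid_mult"
  shows "0 \<le> x \<Longrightarrow> 0 \<le> y \<Longrightarrow> c ^ nat (x + y) = c ^ nat x * c ^ nat y"
  by (simp add: nat_add_distrib power_add)

lemma sum_int_shift_eq:
  fixes f :: "int \<Rightarrow> 'a::comm_monoid_add"
  assumes "f (a - 1) = 0" and "f b = 0"
  shows "(\<Sum>j\<in>{a..b}. f (j - 1)) = (\<Sum>j\<in>{a..b}. f j)"
proof (cases "a \<le> b")
  case True
  have "(\<Sum>j\<in>{a..b}. f (j - 1)) = (\<Sum>j\<in>{a-1..b-1}. f j)"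
    by (rule sum.reindex_bij_witness[of _ "\<lambda>j. j + 1" "\<lambda>j. j - 1"]) auto
  also have "\<dots> = (\<Sum>j\<in>insert (a - 1) {a..b-1}. f j)"
    using True by (intro sum.cong) auto
  also have "\<dots> = (\<Sum>j\<in>insert b {a..b-1}. f j)"
    using assms by simp
  also have "\<dots> = (\<Sum>j\<in>{a..b}. f j)"
    using True by (intro sum.cong) auto
  finally show ?thesis .
qed simp

definition pascal_remainder :: "int \<Rightarrow> int \<Rightarrow> int \<Rightarrow> rat poly" where
  "pascal_remainder n m j =
     qvar ^ nat (n - m + j + j^2) * qbinom (n - 1) (m - j - 1) * qbinom (n - m - 1) j"

lemma pascal_split_first_factor:
  assumes "0 \<le> j" and "j \<le> m" and "m < n"
  shows "qbinom n (m - j) * qbinom (n - m - 1) j * qvar ^ nat (j^2)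
       = qbinom (n - 1) (m - j) * qbinom (n - m - 1) j * qvar ^ nat (j^2) + pascal_remainder n m j"
proof -
  have "qbinom n (m - j) = qbinom (n - 1) (m - j) + qvar ^ nat (n - m + j) * qbinom (n - 1) (m - j - 1)"
    using qbinom_pascal[of n "m - j"] assms by (simp add: algebra_simps)
  moreover have "qvar ^ nat (n - m + j + j^2) = qvar ^ nat (n - m + j) * qvar ^ nat (j^2)"
    using assms by (intro power_nat_add) auto
  ultimately show ?thesis by (simp add: pascal_remainder_def algebra_simps)
qed

lemma pascal_split_second_factor:
  assumes "m < n"
  shows "qbinom (n - 1) (m - j) * qbinom (n - m) j * qvar ^ nat (j^2)
       = qbinom (n - 1) (m - j) * qbinom (n - m - 1) j * qvar ^ nat (j^2) + pascal_remainder n m (j - 1)"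
proof -
  have pascal: "qbinom (n - m) j = qbinom (n - m - 1) j + qvar ^ nat (n - m - j) * qbinom (n - m - 1) (j - 1)"
    using qbinom_pascal[of "n - m" j] assms by simp
  show ?thesis
  proof (cases "0 \<le> n - m - j")
    case True
    have "n - m + (j - 1) + (j - 1)^2 = (n - m - j) + j^2" by algebra
    then have "qvar ^ nat (n - m + (j - 1) + (j - 1)^2) = qvar ^ nat (n - m - j) * qvar ^ nat (j^2)"
      using True by (simp only:) (intro power_nat_add, simp_all)
    then show ?thesis by (simp add: pascal pascal_remainder_def algebra_simps)
  next
    case False
    then show ?thesis by (simp add: pascal pascal_remainder_def qbinom_out_of_range)
  qed
qed

theorem mainTheorem18:
  fixes n m :: int
  assumes "n \<ge> 1" and "0 \<le> m" and "m \<le> n - 1"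
  shows "(\<Sum>j\<in>{0..m}. qbinom n (m - j) * qbinom (n - m - 1) j * qvar ^ (nat (j^2)))
       = (\<Sum>j\<in>{0..m}. qbinom (n - 1) (m - j) * qbinom (n - m) j * qvar ^ (nat (j^2)))"
proof -
  define C where "C j = qbinom (n - 1) (m - j) * qbinom (n - m - 1) j * qvar ^ nat (j^2)" for j
  define R where "R = pascal_remainder n m"
  have "m < n" using assms by simp
  have shift: "(\<Sum>j\<in>{0..m}. R (j - 1)) = (\<Sum>j\<in>{0..m}. R j)"
    by (rule sum_int_shift_eq) (simp_all add: R_def pascal_remainder_def qbinom_out_of_range)
  have "(\<Sum>j\<in>{0..m}. qbinom n (m - j) * qbinom (n - m - 1) j * qvar ^ nat (j^2))
      = (\<Sum>j\<in>{0..m}. C j + R j)"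
    using \<open>m < n\<close> by (intro sum.cong) (simp_all add: C_def R_def pascal_split_first_factor)
  also have "\<dots> = (\<Sum>j\<in>{0..m}. C j + R (j - 1))"
    by (simp add: sum.distrib shift)
  also have "\<dots> = (\<Sum>j\<in>{0..m}. qbinom (n - 1) (m - j) * qbinom (n - m) j * qvar ^ nat (j^2))"
    using pascal_split_second_factor[OF \<open>m < n\<close>] by (simp add: C_def R_def)
  finally show ?thesis .
qed

end
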